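(* Let $0 \leq r < 1$. Define $\delta_k \in \{0,1\}$ for $k \geq 1$ inductively by $\delta_k = 1$ if $\frac{\sum_{i=1}^{k-1} 2i\delta_i + 2k}{k(k+1)} \leq r$, and $\delta_k = 0$ otherwise. For $k \geq 1$ let $w^{\langle k \rangle}$ be the word consisting of $2k$ copies of the letter $1 - \delta_k$, and let $w = w^{\langle 1 \rangle} w^{\langle 2 \rangle} w^{\langle 3 \rangle} \cdots$ (infinite concatenation). Then $\lim_{n \to \infty} |Z(w^{(n)})|/n = r$.
   Context: $w^{(n)}$ denotes the initial subword of length $n$ of $w$, and $Z(u)$ is the set of indices $i$ with $u_i = 0$. *)

theory Defs
  imports "HOL-Analysis.Analysis"
begin

text \<open>delta_k = 1 iff (sum_{i=1}^{k-1} 2 i delta_i + 2k)/(k(k+1)) <= r (for k >= 1).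
  To avoid recursion through a sum, we recurse on the partial sums
  dsum r k = sum_{i=1}^{k} 2 i delta_i.\<close>

fun dsum :: "real \<Rightarrow> nat \<Rightarrow> real" where
  "dsum r 0 = 0"
| "dsum r (Suc k) = dsum r k +
     (if (dsum r k + 2 * real (Suc k)) / (real (Suc k) * real (Suc k + 1)) \<le> r
      then 2 * real (Suc k) else 0)"

definition delta :: "real \<Rightarrow> nat \<Rightarrow> nat" where
  "delta r k = (if (dsum r (k - 1) + 2 * real k) / (real k * real (k + 1)) \<le> r then 1 else 0)"

text \<open>Infinite word w = w<1> w<2> w<3> ..., positions 0-indexed; the block
  w<k> (2k copies of 1 - delta_k) occupies positions k(k-1) .. k(k+1)-1.\<close>

definition block_of :: "nat \<Rightarrow> nat" where
  "block_of p = (LEAST k. p < k * (k + 1))"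

definition word :: "real \<Rightarrow> nat \<Rightarrow> nat" where
  "word r p = 1 - delta r (block_of p)"

definition zeros_prefix :: "(nat \<Rightarrow> nat) \<Rightarrow> nat \<Rightarrow> nat" where
  "zeros_prefix w n = card {i. i < n \<and> w i = 0}"

end

theory Submission
  imports Defs "HOL-Real_Asymp.Real_Asymp"
begin

text \<open>The first \<open>k(k+1)\<close> letters are the blocks \<open>1..k\<close> and contain \<open>dsum r k\<close> zeros.
  The greedy choice of \<open>\<delta>\<close> takes the next block of zeros exactly when this does not
  overshoot the target \<open>r k(k+1)\<close>, which keeps \<open>dsum r k\<close> between \<open>r k(k+1) - 2k\<close> and
  \<open>r k(k+1)\<close>.  Inside a block the count moves by at most the block length \<open>2(k+1)\<close>, so after
  \<open>n\<close> letters it differs from \<open>rn\<close> by \<open>O(\<surd>n)\<close>.\<close>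

lemma zeros_prefix_Suc:
  "zeros_prefix w (Suc n) = zeros_prefix w n + (if w n = 0 then 1 else 0)"
proof -
  have "{i. i < Suc n \<and> w i = 0} = {i. i < n \<and> w i = 0} \<union> (if w n = 0 then {n} else {})"
    by (auto simp: less_Suc_eq)
  then show ?thesis
    unfolding zeros_prefix_def by (auto simp: card_insert_if)
qed

lemma block_of_eq:
  assumes "k * (k + 1) \<le> p" and "p < (k + 1) * (k + 2)"
  shows "block_of p = Suc k"
  unfolding block_of_def
proof (rule Least_equality)
  show "p < Suc k * (Suc k + 1)"
    using assms(2) by simp
next
  fix m assume m: "p < m * (m + 1)"
  show "Suc k \<le> m"
  proof (rule ccontr)
    assume "\<not> Suc k \<le> m"
    then have "m * (m + 1) \<le> k * (k + 1)"
      by (intro mult_le_mono) auto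
    with m assms(1) show False by simp
  qed
qed

lemma exists_pronic_interval:
  fixes n :: nat
  shows "\<exists>k. k * (k + 1) \<le> n \<and> n < (k + 1) * (k + 2)"
proof (induction n)
  case 0
  show ?case by (rule exI[of _ 0]) simp
next
  case (Suc n)
  then obtain k where k: "k * (k + 1) \<le> n" "n < (k + 1) * (k + 2)"
    by blast
  show ?case
  proof (cases "Suc n < (k + 1) * (k + 2)")
    case True
    with k show ?thesis by (intro exI[of _ k]) simp
  next
    case False
    with k have "Suc n = (k + 1) * (k + 2)" by simp
    then show ?thesis by (intro exI[of _ "k + 1"]) (simp add: algebra_simps)
  qed
qed

lemma delta_cases: "delta r k = 0 \<or> delta r k = 1"
  by (simp add: delta_def)

lemma dsum_Suc_delta: "dsum r (Suc k) = dsum r k + 2 * real (Suc k) * real (delta r (Suc k))"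
  by (simp add: delta_def)

lemma zeros_prefix_word_in_block:
  assumes start: "real (zeros_prefix (word r) (k * (k + 1))) = dsum r k"
    and "j \<le> 2 * (k + 1)"
  shows "real (zeros_prefix (word r) (k * (k + 1) + j)) = dsum r k + real j * real (delta r (Suc k))"
  using \<open>j \<le> 2 * (k + 1)\<close>
proof (induction j)
  case 0
  with start show ?case by simp
next
  case (Suc j)
  have "block_of (k * (k + 1) + j) = Suc k"
    by (rule block_of_eq) (use Suc.prems in \<open>auto simp: algebra_simps\<close>)
  then have "(if word r (k * (k + 1) + j) = 0 then 1 else 0) = delta r (Suc k)"
    using delta_cases[of r "Suc k"] by (auto simp: word_def)
  with Suc show ?case
    by (simp add: zeros_prefix_Suc algebra_simps)
qed

lemma zeros_prefix_word_block_start: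
  "real (zeros_prefix (word r) (k * (k + 1))) = dsum r k"
proof (induction k)
  case 0
  show ?case by (simp add: zeros_prefix_def)
next
  case (Suc k)
  have next_start: "Suc k * (Suc k + 1) = k * (k + 1) + 2 * (k + 1)"
    by (simp add: algebra_simps)
  have "real (zeros_prefix (word r) (k * (k + 1) + 2 * (k + 1)))
        = dsum r k + real (2 * (k + 1)) * real (delta r (Suc k))"
    by (rule zeros_prefix_word_in_block[OF Suc]) simp
  then show ?case
    unfolding next_start dsum_Suc_delta by simp
qed

lemma zeros_prefix_word:
  assumes "j \<le> 2 * (k + 1)"
  shows "real (zeros_prefix (word r) (k * (k + 1) + j)) = dsum r k + real j * real (delta r (Suc k))"
  by (rule zeros_prefix_word_in_block[OF zeros_prefix_word_block_start assms])

lemma dsum_bounds: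
  assumes "0 \<le> r" and "r < 1"
  shows "0 \<le> r * real k * (real k + 1) - dsum r k \<and> r * real k * (real k + 1) - dsum r k \<le> 2 * real k"
proof (induction k)
  case 0
  show ?case by simp
next
  case (Suc k)
  have target_step: "r * real (Suc k) * (real (Suc k) + 1) = r * real k * (real k + 1) + 2 * r * (real k + 1)"
    by (simp add: algebra_simps)
  have "(dsum r k + 2 * real (Suc k)) / (real (Suc k) * real (Suc k + 1)) \<le> r
        \<longleftrightarrow> dsum r k + 2 * (real k + 1) \<le> r * real (Suc k) * (real (Suc k) + 1)"
    by (simp add: divide_le_eq mult.commute mult.left_commute add.commute)
  moreover have "r * (real k + 1) \<le> real k + 1"
    using assms by (simp add: mult_le_cancel_right1)
  moreover have "0 \<le> r * (real k + 1)"
    using assms by simp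
  ultimately show ?case
    using Suc.IH unfolding target_step by (auto simp: algebra_simps)
qed

lemma zeros_prefix_word_deviation:
  assumes "0 \<le> r" and "r < 1"
  shows "\<bar>real (zeros_prefix (word r) n) - r * real n\<bar> \<le> 4 * (sqrt (real n) + 1)"
proof -
  obtain k where k: "k * (k + 1) \<le> n" "n < (k + 1) * (k + 2)"
    using exists_pronic_interval by blast
  define j where "j = n - k * (k + 1)"
  have n_eq: "n = k * (k + 1) + j" and "j \<le> 2 * (k + 1)"
    using k by (auto simp: j_def algebra_simps)
  then have j_le: "real j \<le> 2 * (real k + 1)"
    by (metis of_nat_le_iff of_nat_mult of_nat_numeral of_nat_Suc Suc_eq_plus1 add.commute)
  have "real (k * k) \<le> real n"
    using k(1) by (simp only: of_nat_le_iff) (simp add: algebra_simps)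
  then have k_le: "real k \<le> sqrt (real n)"
    using real_sqrt_le_mono by fastforce
  have "real (zeros_prefix (word r) n) - r * real n
        = (dsum r k - r * real k * (real k + 1)) + real j * (real (delta r (Suc k)) - r)"
    using zeros_prefix_word[OF \<open>j \<le> 2 * (k + 1)\<close>, of r] unfolding n_eq
    by (simp add: algebra_simps)
  moreover have "\<bar>real j * (real (delta r (Suc k)) - r)\<bar> \<le> real j"
    using delta_cases[of r "Suc k"] assms
    by (auto simp: abs_mult intro: mult_left_le_one_le mult_right_le_one_le)
  ultimately show ?thesis
    using dsum_bounds[OF assms, of k] j_le k_le by (simp add: abs_le_iff)
qed

theorem lemma4p16:
  fixes r :: real
  assumes "0 \<le> r" and "r < 1"
  shows "(\<lambda>n. real (zeros_prefix (word r) n) / real n) \<longlonglongrightarrow> r"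
proof -
  let ?Z = "\<lambda>n. real (zeros_prefix (word r) n)"
  have bound_to_0: "(\<lambda>n::nat. 4 * (sqrt (real n) + 1) / real n) \<longlonglongrightarrow> 0"
    by real_asymp
  have "\<forall>\<^sub>F n in sequentially. norm (?Z n / real n - r) \<le> 4 * (sqrt (real n) + 1) / real n"
  proof (rule eventually_sequentiallyI[of 1])
    fix n :: nat assume "1 \<le> n"
    then have "norm (?Z n / real n - r) = \<bar>?Z n - r * real n\<bar> / real n"
      by (simp add: field_simps)
    also have "\<dots> \<le> 4 * (sqrt (real n) + 1) / real n"
      using zeros_prefix_word_deviation[OF assms, of n] by (simp add: divide_right_mono)
    finally show "norm (?Z n / real n - r) \<le> 4 * (sqrt (real n) + 1) / real n" .
  qed
  then have "(\<lambda>n. ?Z n / real n - r) \<longlonglongrightarrow> 0"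
    by (rule Lim_null_comparison[OF _ bound_to_0])
  then show ?thesis
    by (simp add: LIM_zero_iff)
qed

end
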